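(* For all integers $3\le n\le m$, \[ \gamma_{2t}(K_n\Box K_n)\le\gamma_{2t}(K_n\Box K_m)\le\min\{2n,\ \gamma_{2t}(K_n\Box K_n)+m-n\}. \]
   Context: For a graph $G=(V,E)$, a set $S\subseteq V$ is a total $2$-dominating set if every vertex of $V$ (including those in $S$) is adjacent to at least $2$ vertices of $S$; $\gamma_{2t}(G)$ is the minimum cardinality of such a set. $G\Box H$ denotes the Cartesian product: vertex set $V(G)\times V(H)$, with $(u_1,v_1)\sim(u_2,v_2)$ iff either $u_1=u_2$ and $v_1\sim v_2$, or $v_1=v_2$ and $u_1\sim u_2$. $K_n$ is the complete graph on $n$ vertices. *)

theory Defs
  imports Main
begin

text \<open>A graph is given by a vertex set V and a symmetric irreflexive adjacency relation adj.\<close>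

definition total_2_dominating :: "'a set \<Rightarrow> ('a \<Rightarrow> 'a \<Rightarrow> bool) \<Rightarrow> 'a set \<Rightarrow> bool" where
  "total_2_dominating V adj S \<longleftrightarrow> S \<subseteq> V \<and> (\<forall>v\<in>V. card {u\<in>S. adj v u} \<ge> 2)"

text \<open>Total 2-domination number: minimum cardinality of a total 2-dominating set
  (for finite V; meaningful when such a set exists).\<close>
definition gamma_2t :: "'a set \<Rightarrow> ('a \<Rightarrow> 'a \<Rightarrow> bool) \<Rightarrow> nat" where
  "gamma_2t V adj = Min {card S | S. total_2_dominating V adj S}"

definition K_vertices :: "nat \<Rightarrow> nat set" where
  "K_vertices n = {0..<n}"

definition K_adj :: "nat \<Rightarrow> nat \<Rightarrow> bool" where
  "K_adj u v \<longleftrightarrow> u \<noteq> v"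

definition cart_vertices :: "'a set \<Rightarrow> 'b set \<Rightarrow> ('a \<times> 'b) set" where
  "cart_vertices V W = V \<times> W"

definition cart_adj :: "('a \<Rightarrow> 'a \<Rightarrow> bool) \<Rightarrow> ('b \<Rightarrow> 'b \<Rightarrow> bool) \<Rightarrow> ('a \<times> 'b) \<Rightarrow> ('a \<times> 'b) \<Rightarrow> bool" where
  "cart_adj adjG adjH p q \<longleftrightarrow>
     (fst p = fst q \<and> adjH (snd p) (snd q)) \<or> (snd p = snd q \<and> adjG (fst p) (fst q))"

definition gamma_2t_KK :: "nat \<Rightarrow> nat \<Rightarrow> nat" where
  "gamma_2t_KK n m = gamma_2t (cart_vertices (K_vertices n) (K_vertices m)) (cart_adj K_adj K_adj)"

end

theory Submission
  imports Defs
begin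

text \<open>Read \<open>K\<^sub>n \<box> K\<^sub>m\<close> as the \<open>n \<times> m\<close> rook's graph, where a cell sees the other cells of
  its row and of its column. Two full columns dominate, so \<open>\<gamma>\<^sub>2\<^sub>t \<le> 2n\<close>; and a
  dominating set \<open>S\<close> with \<open>|S| < 2n\<close> meets every row and every column, because an empty line
  forces two cells of \<open>S\<close> into every crossing line.

  For \<open>\<gamma>\<^sub>2\<^sub>t(K\<^sub>n \<box> K\<^sub>n) \<le> \<gamma>\<^sub>2\<^sub>t(K\<^sub>n \<box> K\<^sub>m)\<close> columns are deleted one at a time: with more
  columns than rows and \<open>|S| < 2n\<close> some column holds a single cell \<open>(a, b)\<close> of \<open>S\<close>, whose
  two neighbours in \<open>S\<close> then lie in row \<open>a\<close>. Deleting column \<open>b\<close> and moving \<open>(a, b)\<close> to a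
  free cell of row \<open>a\<close> (or dropping it if row \<open>a\<close> is full) keeps \<open>S\<close> dominating.

  For the other bound, a dominating set of the \<open>n \<times> n\<close> board with \<open>|S| < 2n\<close> has a row with
  two cells: if every row held exactly one, the column of any cell would hold three, forcing
  \<open>|S| > n\<close>. Extending that row across the \<open>m - n\<close> new columns dominates them.\<close>

abbreviation rook :: "nat \<times> nat \<Rightarrow> nat \<times> nat \<Rightarrow> bool" where
  "rook \<equiv> cart_adj K_adj K_adj"

abbreviation rook_dominating :: "nat set \<Rightarrow> nat set \<Rightarrow> (nat \<times> nat) set \<Rightarrow> bool" where
  "rook_dominating R C S \<equiv> total_2_dominating (R \<times> C) rook S"

abbreviation row :: "('a \<times> 'b) set \<Rightarrow> 'a \<Rightarrow> ('a \<times> 'b) set" where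
  "row S a \<equiv> {p \<in> S. fst p = a}"

abbreviation column :: "('a \<times> 'b) set \<Rightarrow> 'b \<Rightarrow> ('a \<times> 'b) set" where
  "column S b \<equiv> {p \<in> S. snd p = b}"

lemma rook_iff [simp]:
  "rook p q \<longleftrightarrow> (fst p = fst q \<and> snd p \<noteq> snd q) \<or> (snd p = snd q \<and> fst p \<noteq> fst q)"
  by (auto simp: cart_adj_def K_adj_def)

lemma finite_card_total_2_dominating:
  assumes "finite V"
  shows "finite {card S | S. total_2_dominating V adj S}"
proof (rule finite_subset)
  show "{card S | S. total_2_dominating V adj S} \<subseteq> {..card V}"
    using assms by (auto simp: total_2_dominating_def intro: card_mono)
qed simp

lemma gamma_2t_le_card:
  assumes "finite V" "total_2_dominating V adj S"
  shows "gamma_2t V adj \<le> card S"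
  unfolding gamma_2t_def using finite_card_total_2_dominating[OF assms(1)] assms(2)
  by (auto intro: Min_le)

lemma gamma_2t_attained:
  assumes "finite V" "total_2_dominating V adj S"
  obtains S' where "total_2_dominating V adj S'" "card S' = gamma_2t V adj"
proof -
  have "gamma_2t V adj \<in> {card S | S. total_2_dominating V adj S}"
    unfolding gamma_2t_def using finite_card_total_2_dominating[OF assms(1)] assms(2)
    by (intro Min_in) auto
  then show ?thesis using that by auto
qed

lemma gamma_2t_KK_eq_rook: "gamma_2t_KK n m = gamma_2t ({0..<n} \<times> {0..<m}) rook"
  by (simp add: gamma_2t_KK_def cart_vertices_def K_vertices_def)

lemma two_le_card: "finite A \<Longrightarrow> u \<in> A \<Longrightarrow> v \<in> A \<Longrightarrow> u \<noteq> v \<Longrightarrow> 2 \<le> card A"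
  using card_mono[of A "{u, v}"] by auto

lemma card_eq_sum_card_fibres:
  assumes "finite S" "finite I" "f ` S \<subseteq> I"
  shows "card S = (\<Sum>i\<in>I. card {x \<in> S. f x = i})"
proof -
  have "card S = card (\<Union>i\<in>I. {x \<in> S. f x = i})"
    using assms(3) by (intro arg_cong[where f = card]) auto
  also have "\<dots> = (\<Sum>i\<in>I. card {x \<in> S. f x = i})"
    by (rule card_UN_disjoint) (use assms(1,2) in auto)
  finally show ?thesis .
qed

lemma card_ge_if_fibres_ge:
  assumes "finite S" "finite I" "f ` S \<subseteq> I" "\<And>i. i \<in> I \<Longrightarrow> k \<le> card {x \<in> S. f x = i}"
  shows "k * card I \<le> card S"
  using sum_bounded_below[of I k] assms card_eq_sum_card_fibres[OF assms(1-3)]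
  by (simp add: mult.commute)

lemma rook_dominatingD:
  "rook_dominating R C S \<Longrightarrow> x \<in> R \<Longrightarrow> y \<in> C \<Longrightarrow> 2 \<le> card {u \<in> S. rook (x, y) u}"
  by (auto simp: total_2_dominating_def simp del: rook_iff)

lemma rook_dominating_subset: "rook_dominating R C S \<Longrightarrow> S \<subseteq> R \<times> C"
  by (simp add: total_2_dominating_def)

lemma rook_dominating_finite:
  "rook_dominating R C S \<Longrightarrow> finite R \<Longrightarrow> finite C \<Longrightarrow> finite S"
  using finite_subset[OF rook_dominating_subset] by blast

lemma rook_dominating_two_columns:
  assumes "2 \<le> card R" "c0 \<in> C" "c1 \<in> C" "c0 \<noteq> c1"
  shows "rook_dominating R C (R \<times> {c0, c1})"
  unfolding total_2_dominating_def
proof (intro conjI ballI)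
  show "R \<times> {c0, c1} \<subseteq> R \<times> C" using assms by auto
next
  fix p assume "p \<in> R \<times> C"
  then obtain a b where p: "p = (a, b)" "a \<in> R" by auto
  have "finite R" using assms(1) by (intro card_ge_0_finite) simp
  then have fin: "finite {u \<in> R \<times> {c0, c1}. rook p u}" by simp
  have "\<not> R \<subseteq> {a}" using assms(1) card_mono[of "{a}" R] by auto
  then obtain a' where a': "a' \<in> R" "a' \<noteq> a" by blast
  consider "b = c0" | "b = c1" | "b \<noteq> c0" "b \<noteq> c1" by blast
  then show "2 \<le> card {u \<in> R \<times> {c0, c1}. rook p u}"
  proof cases
    case 1
    show ?thesis by (rule two_le_card[OF fin, of "(a, c1)" "(a', c0)"]) (use p a' 1 assms in auto)
  next
    case 2
    show ?thesis by (rule two_le_card[OF fin, of "(a, c0)" "(a', c1)"]) (use p a' 2 assms in auto)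
  next
    case 3
    show ?thesis by (rule two_le_card[OF fin, of "(a, c0)" "(a, c1)"]) (use p 3 assms in auto)
  qed
qed

lemma rook_dominating_column_nonempty:
  assumes T: "rook_dominating R C S" and "finite R" "finite C" "b \<in> C" "card S < 2 * card R"
  shows "column S b \<noteq> {}"
proof
  assume empty: "column S b = {}"
  have fin: "finite S" using rook_dominating_finite assms by blast
  have "2 * card R \<le> card S"
  proof (rule card_ge_if_fibres_ge[OF fin \<open>finite R\<close>])
    show "fst ` S \<subseteq> R" using rook_dominating_subset[OF T] by auto
    fix a assume "a \<in> R"
    then have "2 \<le> card {u \<in> S. rook (a, b) u}" by (rule rook_dominatingD[OF T _ assms(4)])
    also have "\<dots> \<le> card (row S a)"
      using fin empty by (intro card_mono) fastforce+
    finally show "2 \<le> card (row S a)" .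
  qed
  with assms(5) show False by linarith
qed

lemma rook_dominating_row_nonempty:
  assumes T: "rook_dominating R C S" and "finite R" "finite C" "a \<in> R" "card S < 2 * card C"
  shows "row S a \<noteq> {}"
proof
  assume empty: "row S a = {}"
  have fin: "finite S" using rook_dominating_finite assms by blast
  have "2 * card C \<le> card S"
  proof (rule card_ge_if_fibres_ge[OF fin \<open>finite C\<close>])
    show "snd ` S \<subseteq> C" using rook_dominating_subset[OF T] by auto
    fix b assume "b \<in> C"
    then have "2 \<le> card {u \<in> S. rook (a, b) u}" by (rule rook_dominatingD[OF T assms(4)])
    also have "\<dots> \<le> card (column S b)"
      using fin empty by (intro card_mono) fastforce+
    finally show "2 \<le> card (column S b)" .
  qed
  with assms(5) show False by linarith
qed

lemma rook_dominating_singleton_column: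
  assumes T: "rook_dominating R C S" and "finite R" "finite C"
    and "card R \<le> card C" "card S < 2 * card R"
  obtains a b where "b \<in> C" "column S b = {(a, b)}"
proof -
  have "\<exists>b\<in>C. card (column S b) = 1"
  proof (rule ccontr)
    assume no_singleton: "\<not> ?thesis"
    have fin: "finite S" using rook_dominating_finite assms by blast
    have "2 \<le> card (column S b)" if "b \<in> C" for b
    proof -
      have "column S b \<noteq> {}" by (rule rook_dominating_column_nonempty[OF T assms(2,3) that assms(5)])
      then have "card (column S b) \<noteq> 0" using fin by simp
      moreover have "card (column S b) \<noteq> 1" using no_singleton that by blast
      ultimately show ?thesis by linarith
    qed
    moreover have "snd ` S \<subseteq> C" using rook_dominating_subset[OF T] by auto
    ultimately have "2 * card C \<le> card S" using card_ge_if_fibres_ge[OF fin assms(3)] by blast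
    then show False using assms by linarith
  qed
  then obtain b z where b: "b \<in> C" and z: "column S b = {z}" by (metis card_1_singletonE)
  then have "z = (fst z, b)" by (metis (mono_tags) insertI1 mem_Collect_eq prod.collapse)
  with z have "column S b = {(fst z, b)}" by simp
  then show ?thesis by (rule that[OF b])
qed

lemma ex_rook_dominating_card_double:
  assumes "2 \<le> card R" "2 \<le> card C"
  obtains S where "rook_dominating R C S" "card S = 2 * card R"
proof -
  have "finite C" using assms(2) by (intro card_ge_0_finite) simp
  obtain c0 where c0: "c0 \<in> C" using assms(2) by fastforce
  have "\<not> C \<subseteq> {c0}" using assms(2) card_mono[OF _ _, of "{c0}" C] by auto
  then obtain c1 where c1: "c1 \<in> C" "c1 \<noteq> c0" by blast
  have "finite R" using assms(1) by (intro card_ge_0_finite) simp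
  then have "card (R \<times> {c0, c1}) = 2 * card R" using c1 by (simp add: card_cartesian_product)
  with rook_dominating_two_columns[OF assms(1) c0 c1(1)] c1(2) show ?thesis using that by metis
qed

lemma rook_dominating_move_singleton:
  assumes T: "rook_dominating R C S" and fin: "finite S" and col: "column S b = {(a, b)}"
    and b': "b' \<in> C" "b' \<noteq> b" "(a, b') \<notin> S"
  shows "rook_dominating R (C - {b}) (insert (a, b') (S - {(a, b)}))"
    (is "rook_dominating R _ ?S'")
  unfolding total_2_dominating_def
proof (intro conjI ballI)
  have "a \<in> R" using col rook_dominating_subset[OF T] by blast
  then show "?S' \<subseteq> R \<times> (C - {b})" using rook_dominating_subset[OF T] col b' by fastforce
next
  fix p assume p: "p \<in> R \<times> (C - {b})"
  have fin': "finite {u \<in> ?S'. rook p u}" using fin by simp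
  show "2 \<le> card {u \<in> ?S'. rook p u}"
  proof (cases "p = (a, b')")
    case True
    \<comment> \<open>The neighbours of \<open>(a, b)\<close> all lie in row \<open>a\<close>, so \<open>(a, b')\<close> sees them as well.\<close>
    have "(a, b) \<in> R \<times> C" using col rook_dominating_subset[OF T] by blast
    then have "2 \<le> card {u \<in> S. rook (a, b) u}" using rook_dominatingD[OF T] by blast
    also have "\<dots> \<le> card {u \<in> ?S'. rook p u}"
      using True col b' by (intro card_mono[OF fin']) force
    finally show ?thesis .
  next
    case False
    \<comment> \<open>Every other cell loses \<open>(a, b)\<close> as a neighbour only if it gains \<open>(a, b')\<close>.\<close>
    define move where "move u = (if u = (a, b) then (a, b') else u)" for u
    have "inj_on move S" using b' by (auto simp: move_def inj_on_def)
    then have "card {u \<in> S. rook p u} = card (move ` {u \<in> S. rook p u})"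
      by (simp add: card_image inj_on_subset)
    also have "\<dots> \<le> card {u \<in> ?S'. rook p u}"
      using False p b' by (intro card_mono[OF fin']) (auto simp: move_def)
    finally show ?thesis using rook_dominatingD[OF T] p by fastforce
  qed
qed

lemma rook_dominating_drop_singleton:
  assumes T: "rook_dominating R C S" and fin: "finite S" and col: "column S b = {(a, b)}"
    and full: "{a} \<times> (C - {b}) \<subseteq> S" and big: "4 \<le> card C"
  shows "rook_dominating R (C - {b}) (S - {(a, b)})"
  unfolding total_2_dominating_def
proof (intro conjI ballI)
  show "S - {(a, b)} \<subseteq> R \<times> (C - {b})" using rook_dominating_subset[OF T] col by fastforce
next
  fix p assume p: "p \<in> R \<times> (C - {b})"
  show "2 \<le> card {u \<in> S - {(a, b)}. rook p u}"
  proof (cases "fst p = a")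
    case True
    have "card C - card {b, snd p} \<le> card (C - {b, snd p})"
      by (rule diff_card_le_card_Diff) simp
    moreover have "card {b, snd p} \<le> 2" by (simp add: card_insert_if)
    ultimately have "2 \<le> card ({a} \<times> (C - {b, snd p}))"
      using big by (simp add: card_cartesian_product)
    also have "\<dots> \<le> card {u \<in> S - {(a, b)}. rook p u}"
      using fin full True by (intro card_mono) auto
    finally show ?thesis .
  next
    case False
    have "2 \<le> card {u \<in> S. rook p u}" using rook_dominatingD[OF T] p by auto
    also have "\<dots> \<le> card {u \<in> S - {(a, b)}. rook p u}"
      using fin False p by (intro card_mono) auto
    finally show ?thesis .
  qed
qed

lemma rook_dominating_delete_column:
  assumes T: "rook_dominating R C S" and "finite R" "finite C"
    and "3 \<le> card R" "card R < card C" "card S < 2 * card R"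
  obtains b S' where "b \<in> C" "rook_dominating R (C - {b}) S'" "card S' \<le> card S"
proof -
  have fin: "finite S" using rook_dominating_finite assms(1-3) by blast
  obtain a b where b: "b \<in> C" and col: "column S b = {(a, b)}"
    using rook_dominating_singleton_column[OF T assms(2,3) less_imp_le[OF assms(5)] assms(6)] .
  have ab: "(a, b) \<in> S" using col by blast
  show ?thesis
  proof (cases "{a} \<times> (C - {b}) \<subseteq> S")
    case True
    have "rook_dominating R (C - {b}) (S - {(a, b)})"
      by (rule rook_dominating_drop_singleton[OF T fin col True]) (use assms(4,5) in linarith)
    moreover have "card (S - {(a, b)}) \<le> card S" by (rule card_Diff1_le)
    ultimately show ?thesis by (rule that[OF b])
  next
    case False
    then obtain b' where b': "b' \<in> C" "b' \<noteq> b" "(a, b') \<notin> S" by blast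
    have "rook_dominating R (C - {b}) (insert (a, b') (S - {(a, b)}))"
      by (rule rook_dominating_move_singleton[OF T fin col b'])
    moreover have "card (insert (a, b') (S - {(a, b)})) = card S"
      using fin b'(3) card.remove[OF fin ab] by simp
    ultimately show ?thesis using that[OF b] by simp
  qed
qed

lemma rook_dominating_restrict_columns:
  assumes "rook_dominating R C S" "finite R" "finite C" "3 \<le> card R" "card R \<le> card C"
  obtains C' S' where "C' \<subseteq> C" "card C' = card R" "rook_dominating R C' S'" "card S' \<le> card S"
  using assms
proof (induction "card C" arbitrary: C S thesis rule: less_induct)
  case less
  consider "card C = card R" | "2 * card R \<le> card S" | "card R < card C" "card S < 2 * card R"
    using less.prems(6) by linarith
  then show ?case
  proof cases
    case 1
    then show ?thesis using less.prems(1,2) by blast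
  next
    case 2
    obtain C' where C': "C' \<subseteq> C" "card C' = card R"
      using obtain_subset_with_card_n less.prems(6) by metis
    have two: "2 \<le> card R" using less.prems(5) by linarith
    with C'(2) have "2 \<le> card C'" by simp
    then obtain S' where "rook_dominating R C' S'" "card S' = 2 * card R"
      by (rule ex_rook_dominating_card_double[OF two])
    then show ?thesis using C' 2 less.prems(1) by simp
  next
    case 3
    obtain b S' where b: "b \<in> C" and T': "rook_dominating R (C - {b}) S'" and S': "card S' \<le> card S"
      using rook_dominating_delete_column[OF less.prems(2-5) 3] by blast
    have smaller: "card (C - {b}) < card C" by (rule card_Diff1_less[OF less.prems(4) b])
    have "card R \<le> card (C - {b})" using b 3(1) less.prems(4) by (simp add: card_Diff_singleton)
    show ?thesis
    proof (rule less.hyps[OF smaller _ T' less.prems(3) _ less.prems(5) \<open>card R \<le> card (C - {b})\<close>])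
      fix C' S'' assume "C' \<subseteq> C - {b}" "card C' = card R" "rook_dominating R C' S''" "card S'' \<le> card S'"
      then show ?thesis using S' by (intro less.prems(1)[of C' S'']) auto
    qed (use less.prems(4) in simp)
  qed
qed

lemma rook_dominating_relabel_columns:
  assumes f: "bij_betw f C D" and T: "rook_dominating R C S"
  shows "rook_dominating R D (map_prod id f ` S)" "card (map_prod id f ` S) = card S"
proof -
  have sub: "S \<subseteq> R \<times> C" by (rule rook_dominating_subset[OF T])
  have inj: "inj_on f C" using f by (simp add: bij_betw_def)
  have inj_S: "inj_on (map_prod id f) S"
    by (rule inj_on_subset[OF map_prod_inj_on[OF inj_on_id inj] sub])
  then show "card (map_prod id f ` S) = card S" by (rule card_image)
  show "rook_dominating R D (map_prod id f ` S)"
    unfolding total_2_dominating_def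
  proof (intro conjI ballI)
    show "map_prod id f ` S \<subseteq> R \<times> D" using sub bij_betw_imp_surj_on[OF f] by auto
  next
    fix p assume "p \<in> R \<times> D"
    then obtain x d where x: "x \<in> R" and d: "d \<in> f ` C" and p: "p = (x, d)"
      using bij_betw_imp_surj_on[OF f] by blast
    then obtain y where y: "y \<in> C" and "d = f y" by blast
    have adj: "rook p (map_prod id f u) \<longleftrightarrow> rook (x, y) u" if u: "u \<in> S" for u
    proof -
      obtain u1 u2 where "u = (u1, u2)" "u2 \<in> C" using u sub by blast
      then show ?thesis using inj_on_eq_iff[OF inj y \<open>u2 \<in> C\<close>] p \<open>d = f y\<close> by simp
    qed
    have "{u \<in> map_prod id f ` S. rook p u} = map_prod id f ` {u \<in> S. rook p (map_prod id f u)}"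
      by (auto simp del: rook_iff)
    also have "\<dots> = map_prod id f ` {u \<in> S. rook (x, y) u}"
      using adj by (metis (mono_tags, lifting) Collect_cong)
    also have "card \<dots> = card {u \<in> S. rook (x, y) u}"
      by (rule card_image[OF inj_on_subset[OF inj_S]]) simp
    finally show "2 \<le> card {u \<in> map_prod id f ` S. rook p u}"
      using rook_dominatingD[OF T x y] by simp
  qed
qed

lemma rook_dominating_singleton_row:
  assumes T: "rook_dominating R C S" and fin: "finite S" and row: "row S a = {(a, b)}"
  shows "3 \<le> card (column S b)"
proof -
  have ab: "(a, b) \<in> S" using row by blast
  then have "a \<in> R" "b \<in> C" using rook_dominating_subset[OF T] by auto
  define N where "N = {u \<in> S. rook (a, b) u}"
  have "2 \<le> card N" unfolding N_def by (rule rook_dominatingD[OF T \<open>a \<in> R\<close> \<open>b \<in> C\<close>])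
  moreover have "N \<subseteq> column S b"
  proof
    fix u assume "u \<in> N"
    then have u: "u \<in> S" "rook (a, b) u" unfolding N_def by auto
    have "fst u \<noteq> a"
    proof
      assume "fst u = a"
      then have "u \<in> row S a" using u(1) by simp
      then have "u = (a, b)" unfolding row by simp
      then show False using u(2) by simp
    qed
    then show "u \<in> column S b" using u by auto
  qed
  moreover have "(a, b) \<in> column S b" "(a, b) \<notin> N" using ab unfolding N_def by auto
  moreover have "finite (column S b)" using fin by simp
  ultimately show ?thesis
    using card_mono[of "column S b" "insert (a, b) N"] card_insert_disjoint[of N "(a, b)"]
      finite_subset[of N "column S b"] by simp
qed

lemma rook_dominating_double_row:
  assumes T: "rook_dominating R C S" and "finite R" "finite C" "R \<noteq> {}"
    and "card R \<le> card C" "card S < 2 * card C"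
  obtains r where "r \<in> R" "2 \<le> card (row S r)"
proof -
  have fin: "finite S" using rook_dominating_finite assms(1-3) by blast
  have sub: "S \<subseteq> R \<times> C" by (rule rook_dominating_subset[OF T])
  have "\<exists>r\<in>R. 2 \<le> card (row S r)"
  proof (rule ccontr)
    assume no_double: "\<not> ?thesis"
    have single: "card (row S a) = 1" if "a \<in> R" for a
    proof -
      have "row S a \<noteq> {}" by (rule rook_dominating_row_nonempty[OF T assms(2,3) that assms(6)])
      then have "card (row S a) \<noteq> 0" using fin by simp
      moreover have "\<not> 2 \<le> card (row S a)" using no_double that by blast
      ultimately show ?thesis by linarith
    qed
    have "fst ` S \<subseteq> R" using sub by auto
    then have card_S: "card S = card R"
      using card_eq_sum_card_fibres[OF fin assms(2)] single by simp
    have columns: "1 \<le> card (column S c)" if "c \<in> C" for c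
    proof -
      have "card S < 2 * card R" using card_S assms(2,4) by (simp add: card_gt_0_iff)
      then have "column S c \<noteq> {}" by (rule rook_dominating_column_nonempty[OF T assms(2,3) that])
      then show ?thesis using fin by (simp add: Suc_le_eq card_gt_0_iff)
    qed
    obtain a where "a \<in> R" using assms(4) by blast
    obtain z where z: "row S a = {z}" using single[OF \<open>a \<in> R\<close>] by (rule card_1_singletonE)
    define b where "b = snd z"
    have "z \<in> row S a" unfolding z by simp
    then have "z = (a, b)" unfolding b_def by auto
    with z have row_a: "row S a = {(a, b)}" by simp
    then have "b \<in> C" using sub by blast
    have "snd ` S \<subseteq> C" using sub by auto
    then have "card S = card (column S b) + (\<Sum>c\<in>C - {b}. card (column S c))"
      using card_eq_sum_card_fibres[OF fin assms(3)] sum.remove[OF assms(3) \<open>b \<in> C\<close>] by simp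
    moreover have "card (C - {b}) \<le> (\<Sum>c\<in>C - {b}. card (column S c))"
      using sum_bounded_below[of "C - {b}" 1 "\<lambda>c. card (column S c)"] columns by simp
    moreover have "3 \<le> card (column S b)" by (rule rook_dominating_singleton_row[OF T fin row_a])
    ultimately show False
      using card_S assms(5) \<open>b \<in> C\<close> assms(3) by (simp add: card_Diff_singleton)
  qed
  then show ?thesis using that by blast
qed

lemma rook_dominating_extend_row:
  assumes T: "rook_dominating R C S" and "finite R" "finite C'" "C \<subseteq> C'"
    and r: "r \<in> R" "2 \<le> card (row S r)" and rows: "\<And>a. a \<in> R \<Longrightarrow> row S a \<noteq> {}"
  shows "rook_dominating R C' (S \<union> {r} \<times> (C' - C))" (is "rook_dominating R C' ?S'")
  unfolding total_2_dominating_def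
proof (intro conjI ballI)
  have sub: "S \<subseteq> R \<times> C" by (rule rook_dominating_subset[OF T])
  then show "?S' \<subseteq> R \<times> C'" using assms(4) r(1) by auto
  have fin: "finite ?S'" using finite_subset[OF \<open>?S' \<subseteq> R \<times> C'\<close>] assms(2,3) by blast
  fix p assume "p \<in> R \<times> C'"
  then obtain x y where p: "p = (x, y)" "x \<in> R" "y \<in> C'" by blast
  show "2 \<le> card {u \<in> ?S'. rook p u}"
  proof (cases "y \<in> C")
    case True
    have "2 \<le> card {u \<in> S. rook p u}" using rook_dominatingD[OF T p(2) True] p(1) by simp
    also have "\<dots> \<le> card {u \<in> ?S'. rook p u}" using fin by (intro card_mono) auto
    finally show ?thesis .
  next
    case new: False
    show ?thesis
    proof (cases "x = r")
      case True
      have "row S r \<subseteq> {u \<in> ?S'. rook p u}" using sub new p True by auto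
      moreover have "finite {u \<in> ?S'. rook p u}" using fin by simp
      ultimately show ?thesis using r(2) card_mono by (meson order_trans)
    next
      case False
      obtain z where z: "z \<in> row S x" using rows[OF p(2)] by blast
      have "snd z \<in> C" using z sub by auto
      show ?thesis
        by (rule two_le_card[of _ "(r, y)" z])
          (use fin z p False new r(1) \<open>snd z \<in> C\<close> assms(3) in auto)
    qed
  qed
qed

lemma gamma_2t_KK_le_double:
  assumes "2 \<le> n" "2 \<le> m"
  shows "gamma_2t_KK n m \<le> 2 * n"
proof -
  obtain S where S: "rook_dominating {0..<n} {0..<m} S" "card S = 2 * card {0..<n}"
    by (rule ex_rook_dominating_card_double[of "{0..<n}" "{0..<m}"]) (use assms in simp_all)
  have "gamma_2t_KK n m \<le> card S"
    unfolding gamma_2t_KK_eq_rook by (rule gamma_2t_le_card[OF _ S(1)]) simp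
  then show ?thesis using S(2) by simp
qed

lemma gamma_2t_KK_attained:
  assumes "2 \<le> n" "2 \<le> m"
  obtains S where "rook_dominating {0..<n} {0..<m} S" "card S = gamma_2t_KK n m"
proof -
  obtain S where S: "rook_dominating {0..<n} {0..<m} S"
    by (rule ex_rook_dominating_card_double[of "{0..<n}" "{0..<m}"]) (use assms in simp_all)
  have fin: "finite ({0..<n} \<times> {0..<m})" by simp
  obtain S' where "rook_dominating {0..<n} {0..<m} S'" "card S' = gamma_2t ({0..<n} \<times> {0..<m}) rook"
    by (rule gamma_2t_attained[OF fin S])
  then show ?thesis by (rule that[unfolded gamma_2t_KK_eq_rook])
qed

lemma gamma_2t_KK_square_le:
  assumes "3 \<le> n" "n \<le> m"
  shows "gamma_2t_KK n n \<le> gamma_2t_KK n m"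
proof -
  obtain S where S: "rook_dominating {0..<n} {0..<m} S" "card S = gamma_2t_KK n m"
    by (rule gamma_2t_KK_attained[of n m]) (use assms in linarith)+
  obtain C' S' where C': "C' \<subseteq> {0..<m}" "card C' = card {0..<n}"
    and S': "rook_dominating {0..<n} C' S'" "card S' \<le> card S"
    by (rule rook_dominating_restrict_columns[OF S(1)]) (use assms in simp_all)
  have "finite C'" using C'(1) finite_subset by blast
  then obtain f where "bij_betw f C' {0..<n}" using ex_bij_betw_finite_nat C'(2) by fastforce
  note relabel = rook_dominating_relabel_columns[OF this S'(1)]
  have "gamma_2t_KK n n \<le> card (map_prod id f ` S')"
    unfolding gamma_2t_KK_eq_rook by (rule gamma_2t_le_card[OF _ relabel(1)]) simp
  then show ?thesis using relabel(2) S'(2) S(2) by linarith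
qed

lemma gamma_2t_KK_le_square_add:
  assumes "3 \<le> n" "n \<le> m"
  shows "gamma_2t_KK n m \<le> gamma_2t_KK n n + (m - n)"
proof (cases "2 * n \<le> gamma_2t_KK n n")
  case True
  then show ?thesis using gamma_2t_KK_le_double[of n m] assms by linarith
next
  case False
  obtain S where S: "rook_dominating {0..<n} {0..<n} S" "card S = gamma_2t_KK n n"
    by (rule gamma_2t_KK_attained[of n n]) (use assms in linarith)+
  have small: "card S < 2 * card {0..<n}" using False S(2) by simp
  have ne: "{0..<n} \<noteq> {}" using assms(1) by simp
  obtain r where r: "r \<in> {0..<n}" "2 \<le> card (row S r)"
    by (rule rook_dominating_double_row[OF S(1) finite_atLeastLessThan finite_atLeastLessThan
          ne le_refl small])
  have "{0..<n} \<subseteq> {0..<m}" using assms(2) by simp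
  note extend = rook_dominating_extend_row[OF S(1) finite_atLeastLessThan finite_atLeastLessThan this r
      rook_dominating_row_nonempty[OF S(1) finite_atLeastLessThan finite_atLeastLessThan _ small]]
  have "gamma_2t_KK n m \<le> card (S \<union> {r} \<times> ({0..<m} - {0..<n}))"
    unfolding gamma_2t_KK_eq_rook by (rule gamma_2t_le_card[OF _ extend]) simp
  also have "\<dots> \<le> card S + (m - n)"
    using card_Un_le[of S "{r} \<times> ({0..<m} - {0..<n})"] by (simp add: card_cartesian_product)
  finally show ?thesis using S(2) by simp
qed

theorem proposition16:
  fixes n m :: nat
  assumes "3 \<le> n" and "n \<le> m"
  shows "gamma_2t_KK n n \<le> gamma_2t_KK n m \<and>
         gamma_2t_KK n m \<le> min (2 * n) (gamma_2t_KK n n + (m - n))"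
  using gamma_2t_KK_square_le[OF assms] gamma_2t_KK_le_square_add[OF assms]
    gamma_2t_KK_le_double[of n m] assms by simp

end
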